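(* Let $p$ be a prime. For an integer $r$ with $|r|<2\sqrt p$ define \[ c_{r,p}=\begin{cases} 1/2, &\text{if } r^2-4p=-4\alpha^2 \text{ for some }\alpha\in\mathbb{Z},\\ 2/3, &\text{if } r^2-4p=-3\alpha^2 \text{ for some }\alpha\in\mathbb{Z},\\ 0, &\text{otherwise}. \end{cases} \] Then \[ \sum_{\substack{r\in\mathbb{Z},\ |r|<2\sqrt p,\\ r\equiv 0\pmod 2}}c_{r,p} =\begin{cases} 10/3, & p\equiv 1\pmod{12},\\ 2, & p\equiv 5\pmod{12},\\ 4/3, & p\equiv 7\pmod{12},\\ 0, & p\equiv 11\pmod{12}. \end{cases} \]
   Context: The sum runs over all even integers $r$ (positive, negative and zero) with $|r|<2\sqrt p$. *)

theory Defs
  imports Complex_Main "HOL-Computational_Algebra.Primes"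
begin

definition c_weight :: "int \<Rightarrow> nat \<Rightarrow> real" where
  "c_weight r p =
    (if \<exists>\<alpha>::int. r^2 - 4 * int p = - 4 * \<alpha>^2 then 1/2
     else if \<exists>\<alpha>::int. r^2 - 4 * int p = - 3 * \<alpha>^2 then 2/3
     else 0)"

definition even_range :: "nat \<Rightarrow> int set" where
  "even_range p = {r::int. real_of_int \<bar>r\<bar> < 2 * sqrt (real p) \<and> even r}"

end

theory Submission
  imports Defs "HOL-Number_Theory.Number_Theory" "HOL-Library.Discrete_Functions"
begin

text \<open>Writing \<open>r = 2x\<close>, the weight \<open>c\<^sub>r\<^sub>,\<^sub>p\<close> is \<open>1/2\<close> exactly when \<open>p = x\<^sup>2 + y\<^sup>2\<close> and \<open>2/3\<close>
  exactly when \<open>p = x\<^sup>2 + 3y\<^sup>2\<close> for some \<open>y\<close> (the two cannot happen together, as \<open>\<surd>3\<close> is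
  irrational). So the sum counts the possible \<open>x\<close> in these two representations of \<open>p\<close>.
  A prime is a sum of two squares iff \<open>p \<equiv> 1 (mod 4)\<close>, and of the form \<open>x\<^sup>2 + 3y\<^sup>2\<close> iff
  \<open>p \<equiv> 1 (mod 3)\<close>; existence follows from Thue's lemma applied to a square root of \<open>-1\<close>
  resp. \<open>-3\<close> modulo \<open>p\<close>, and the representations are unique up to signs (and, for
  \<open>x\<^sup>2 + y\<^sup>2\<close>, order), because \<open>p\<close> divides \<open>d(at - bs)(at + bs)\<close> for any two representations
  \<open>a\<^sup>2 + db\<^sup>2 = s\<^sup>2 + dt\<^sup>2 = p\<close>. This gives \<open>4\<close> resp. \<open>2\<close> values of \<open>x\<close> in the two cases.\<close>

lemma prime_not_square:
  assumes "prime p"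
  shows "s^2 \<noteq> int p"
proof
  assume "s^2 = int p"
  hence "int ((nat \<bar>s\<bar>)^2) = int p" by simp
  hence "p = (nat \<bar>s\<bar>)^2" by (simp only: of_nat_eq_iff)
  thus False using assms by (simp add: prime_power_iff)
qed

lemma square_eq_prime_mult_square:
  fixes a b q :: int
  assumes "prime q" "a^2 = q * b^2"
  shows "a = 0"
  using assms(2)
proof (induction "nat \<bar>a\<bar>" arbitrary: a b rule: less_induct)
  case less
  show ?case
  proof (rule ccontr)
    assume "a \<noteq> 0"
    have "q dvd a" using less.prems assms(1) prime_dvd_power by (metis dvd_triv_left)
    then obtain c where c: "a = q * c" by blast
    have q0: "q \<noteq> 0" using assms(1) by auto
    have "q * (q * c^2) = q * b^2" using less.prems by (simp add: c power2_eq_square algebra_simps)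
    hence bc: "b^2 = q * c^2" using q0 by simp
    have "b \<noteq> 0" using less.prems \<open>a \<noteq> 0\<close> by auto
    moreover have "q > 1" using assms(1) prime_gt_1_int by blast
    ultimately have "b^2 < a^2" using less.prems by (simp add: mult_less_cancel_right2)
    hence "\<bar>b\<bar> < \<bar>a\<bar>" by (simp add: power2_less_imp_less)
    hence "nat \<bar>b\<bar> < nat \<bar>a\<bar>" by simp
    with less.hyps bc have "b = 0" by blast
    with \<open>b \<noteq> 0\<close> show False by simp
  qed
qed

lemma thue_lemma:
  assumes "prime p"
  obtains x y :: int where "x \<noteq> 0 \<or> y \<noteq> 0" "x^2 < int p" "y^2 < int p" "int p dvd x - u * y"
proof -
  define m where "m = floor_sqrt p"
  have "m^2 \<noteq> p" using prime_not_square[OF assms, of "int m"] by (simp flip: of_nat_power)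
  hence m_sq: "(int m)^2 < int p" unfolding m_def using le_neq_implies_less
    by (metis floor_sqrt_power2_le of_nat_less_iff of_nat_power)
  have p_lt: "p < (m + 1)^2" unfolding m_def using Suc_floor_sqrt_power2_gt by simp
  define S where "S = {0..int m} \<times> {0..int m}"
  define f where "f = (\<lambda>(a, b). (a - u * b) mod int p)"
  have "f ` S \<subseteq> {0..<int p}" unfolding f_def using prime_gt_0_nat[OF assms] by auto
  hence "card (f ` S) \<le> p" using card_mono[of "{0..<int p}"] by fastforce
  moreover have "card S = (m + 1)^2" unfolding S_def
    by (simp add: card_cartesian_product power2_eq_square nat_add_distrib)
  ultimately have "\<not> inj_on f S" using p_lt card_image by fastforce
  then obtain a b a' b' where ab: "(a, b) \<in> S" "(a', b') \<in> S" "(a, b) \<noteq> (a', b')"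
    and eq: "(a - u * b) mod int p = (a' - u * b') mod int p"
    unfolding inj_on_def f_def by auto
  have "\<bar>a - a'\<bar> \<le> int m" "\<bar>b - b'\<bar> \<le> int m" using ab unfolding S_def by auto
  hence "(a - a')^2 < int p" "(b - b')^2 < int p"
    using m_sq abs_le_square_iff by (metis abs_of_nat le_less_trans)+
  moreover have "int p dvd (a - a') - u * (b - b')"
    using eq mod_eq_dvd_iff by (metis (no_types, lifting) diff_diff_eq diff_diff_eq2 right_diff_distrib)
  moreover have "a - a' \<noteq> 0 \<or> b - b' \<noteq> 0" using ab(3) by auto
  ultimately show thesis using that by blast
qed

lemma exists_ord_eq:
  assumes "prime p" "d dvd p - 1" "d > 0"
  obtains x where "ord p x = d"
proof -
  have "card {x \<in> totatives p. ord p x = d} = totient d"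
    using prime_card_elements_with_ord_eq_totient[of p d] assms prime_gt_1_nat[OF assms(1)] by simp
  hence "{x \<in> totatives p. ord p x = d} \<noteq> {}" using assms(3) by (metis card.empty totient_0_iff not_gr0)
  thus thesis using that by blast
qed

lemma cong_nat_iff_int_dvd: "[a = b] (mod p) \<longleftrightarrow> int p dvd int a - int b"
  by (simp add: cong_int_iff [symmetric] cong_iff_dvd_diff)

lemma prime_dvd_square_plus_one:
  assumes "prime p" "p mod 4 = 1"
  obtains u :: int where "int p dvd u^2 + 1"
proof -
  obtain x where x: "ord p x = 4"
  proof (rule exists_ord_eq[OF assms(1)])
    show "4 dvd p - 1" using assms(2) by presburger
  qed simp_all
  have "int p dvd (int x^2 - 1) * (int x^2 + 1)"
    using conjunct1[OF ord_works[of x p]] cong_nat_iff_int_dvd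
    by (simp add: x algebra_simps power2_eq_square power4_eq_xxxx)
  moreover have "\<not> int p dvd int x^2 - 1"
    using ord_minimal[of 2 p x] x cong_nat_iff_int_dvd by simp
  ultimately have "int p dvd int x^2 + 1"
    using assms(1) prime_dvd_mult_iff[of "int p"] by auto
  thus thesis using that by blast
qed

lemma prime_dvd_square_plus_three:
  assumes "prime p" "p mod 3 = 1"
  obtains u :: int where "int p dvd u^2 + 3"
proof -
  obtain x where x: "ord p x = 3"
  proof (rule exists_ord_eq[OF assms(1)])
    show "3 dvd p - 1" using assms(2) by presburger
  qed simp_all
  have "int p dvd (int x - 1) * (int x^2 + int x + 1)"
    using conjunct1[OF ord_works[of x p]] cong_nat_iff_int_dvd
    by (simp add: x algebra_simps power2_eq_square power3_eq_cube)
  moreover have "\<not> int p dvd int x - 1"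
    using ord_minimal[of 1 p x] x cong_nat_iff_int_dvd by simp
  ultimately have "int p dvd int x^2 + int x + 1"
    using assms(1) prime_dvd_mult_iff[of "int p"] by auto
  hence "int p dvd 4 * (int x^2 + int x + 1)" by (rule dvd_mult)
  moreover have "4 * (int x^2 + int x + 1) = (2 * int x + 1)^2 + 3"
    by (simp add: algebra_simps power2_eq_square)
  ultimately show thesis using that by metis
qed

text \<open>Apply Thue's lemma and use \<open>x\<^sup>2 + d y\<^sup>2 = (x - u y)(x + u y) + y\<^sup>2 (u\<^sup>2 + d)\<close>.\<close>
lemma small_multiple_represented:
  fixes d u :: int
  assumes "prime p" "d > 0" "int p dvd u^2 + d"
  obtains x y k where "x^2 + d * y^2 = k * int p" "0 < k" "k \<le> d"
proof -
  obtain x y where xy: "x \<noteq> 0 \<or> y \<noteq> 0" "x^2 < int p" "y^2 < int p" "int p dvd x - u * y"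
    using thue_lemma[OF assms(1)] by blast
  have "x^2 + d * y^2 = (x - u * y) * (x + u * y) + y^2 * (u^2 + d)"
    by (simp add: algebra_simps power2_eq_square)
  hence "int p dvd x^2 + d * y^2" using xy(4) assms(3) by simp
  then obtain k where k: "x^2 + d * y^2 = k * int p" by (metis dvd_def mult.commute)
  have "0 < x^2 + d * y^2" using xy(1) assms(2)
    by (metis add_nonneg_pos add_pos_nonneg mult_pos_pos zero_le_power2 zero_less_power2
        mult_nonneg_nonneg less_imp_le)
  hence "0 < k" using k prime_gt_0_nat[OF assms(1)] by (simp add: zero_less_mult_iff)
  moreover have "k * int p < (d + 1) * int p"
    using k xy(2,3) assms(2) by (simp add: algebra_simps) (smt (verit) mult_strict_left_mono)
  hence "k \<le> d" using prime_gt_0_nat[OF assms(1)] by (simp add: mult_less_cancel_right)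
  ultimately show thesis using that k by blast
qed

lemma prime_sum_two_squares:
  assumes "prime p" "p mod 4 = 1"
  obtains a b :: int where "a^2 + b^2 = int p"
proof -
  obtain u :: int where "int p dvd u^2 + 1" using prime_dvd_square_plus_one[OF assms] .
  then obtain x y k where "x^2 + 1 * y^2 = k * int p" "0 < k" "k \<le> 1"
    using small_multiple_represented[OF assms(1), of 1 u] by auto
  moreover from this have "k = 1" by simp
  ultimately show thesis using that by simp
qed

lemma square_plus_three_squares_even_imp_dvd_4:
  fixes x y :: int
  assumes "even (x^2 + 3 * y^2)"
  shows "4 dvd x^2 + 3 * y^2"
proof -
  have "even x = even y" using assms by auto
  then consider a b where "x = 2 * a" "y = 2 * b" | a b where "x = 2 * a + 1" "y = 2 * b + 1"
    by (metis evenE oddE)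
  thus ?thesis
  proof cases
    case 1
    then show ?thesis by (simp add: power_mult_distrib)
  next
    case 2
    then have "x^2 + 3 * y^2 = 4 * (a^2 + a + 3 * b^2 + 3 * b + 1)"
      by (simp add: algebra_simps power2_eq_square)
    then show ?thesis by simp
  qed
qed

text \<open>Here \<open>x\<^sup>2 + 3 y\<^sup>2 = k p\<close> with \<open>k \<le> 3\<close>; \<open>k = 2\<close> is impossible modulo 4, and for
  \<open>k = 3\<close> one has \<open>x = 3 z\<close> and \<open>y\<^sup>2 + 3 z\<^sup>2 = p\<close>.\<close>
lemma prime_square_plus_three_squares:
  assumes "prime p" "p mod 3 = 1"
  obtains a b :: int where "a^2 + 3 * b^2 = int p"
proof -
  obtain u :: int where "int p dvd u^2 + 3" using prime_dvd_square_plus_three[OF assms] .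
  then obtain x y k where xy: "x^2 + 3 * y^2 = k * int p" and k: "0 < k" "k \<le> 3"
    using small_multiple_represented[OF assms(1), of 3 u] by auto
  have "p \<noteq> 2" using assms(2) by auto
  hence "odd p" using assms(1) prime_ge_2_nat[of p] prime_odd_nat[of p] by simp
  have "k \<noteq> 2"
  proof
    assume "k = 2"
    hence "4 dvd 2 * int p"
      using xy square_plus_three_squares_even_imp_dvd_4[of x y] by (simp add: mult.commute)
    with \<open>odd p\<close> show False by presburger
  qed
  with k consider "k = 1" | "k = 3" by linarith
  thus thesis
  proof cases
    case 1
    with xy that show thesis by simp
  next
    case 2
    hence "x^2 = 3 * (int p - y^2)" using xy by simp
    hence "(3::int) dvd x^2" by simp
    hence "3 dvd x" using prime_dvd_power[of "3::int" x 2] by simp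
    then obtain z where "x = 3 * z" by blast
    with xy 2 have "y^2 + 3 * z^2 = int p" by (simp add: power2_eq_square algebra_simps)
    with that show thesis by blast
  qed
qed

lemma representations_cross_identity:
  fixes a b s t d P :: int
  assumes "a^2 + d * b^2 = P" "s^2 + d * t^2 = P"
  shows "P * (a^2 - s^2) = d * (a * t - b * s) * (a * t + b * s)"
proof -
  have "P * (a^2 - s^2) = (s^2 + d * t^2) * a^2 - (a^2 + d * b^2) * s^2"
    by (simp only: assms) (simp add: algebra_simps)
  also have "\<dots> = d * (a * t - b * s) * (a * t + b * s)"
    by (simp add: algebra_simps power2_eq_square)
  finally show ?thesis .
qed

lemma representation_eq_if_dvd:
  fixes a b s t d P :: int
  assumes ab: "a^2 + d * b^2 = P" and st: "s^2 + d * t^2 = P"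
    and "P > 0" "d > 0" "P dvd a * t - b * s"
  shows "s^2 = a^2 \<or> (d = 1 \<and> s^2 = b^2)"
proof -
  obtain k where k: "a * t - b * s = P * k" using assms(5) by blast
  have "(a * s + d * b * t)^2 + d * (a * t - b * s)^2 = (a^2 + d * b^2) * (s^2 + d * t^2)"
    by (simp add: algebra_simps power2_eq_square)
  hence brahmagupta: "(a * s + d * b * t)^2 + d * (a * t - b * s)^2 = P^2"
    using ab st by (simp add: power2_eq_square)
  hence "d * (a * t - b * s)^2 \<le> P^2" by (metis le_add_same_cancel2 zero_le_power2)
  hence "P^2 * (d * k^2) \<le> P^2 * 1"
    unfolding k by (simp add: power_mult_distrib algebra_simps)
  hence dk: "d * k^2 \<le> 1" using \<open>P > 0\<close> by (simp add: mult_le_cancel_left)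
  show ?thesis
  proof (cases "k = 0")
    case True
    hence "P * (a^2 - s^2) = 0" using representations_cross_identity[OF ab st] k by simp
    thus ?thesis using \<open>P > 0\<close> by simp
  next
    case False
    hence "1 \<le> k^2" by (simp add: int_one_le_iff_zero_less)
    hence "d \<le> d * k^2" using \<open>d > 0\<close> by (simp add: mult_le_cancel_left1)
    with dk \<open>d > 0\<close> have d1: "d = 1" by linarith
    with dk \<open>1 \<le> k^2\<close> have "k^2 = 1" by simp
    with brahmagupta k d1 have "(a * s + b * t)^2 = 0" by (simp add: power_mult_distrib)
    hence "P * (b^2 - s^2) = 0"
      using representations_cross_identity[of b 1 a P s t] ab st d1 by (simp add: add.commute algebra_simps)
    thus ?thesis using \<open>P > 0\<close> d1 by simp
  qed
qed

lemma representation_unique: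
  fixes a b s t d :: int
  assumes "prime p" "d > 0" "\<not> int p dvd d"
    and ab: "a^2 + d * b^2 = int p" and st: "s^2 + d * t^2 = int p"
  shows "s^2 = a^2 \<or> (d = 1 \<and> s^2 = b^2)"
proof -
  have "int p dvd d * (a * t - b * s) * (a * t + b * s)"
    using representations_cross_identity[OF ab st] by (metis dvd_triv_left)
  hence "int p dvd a * t - b * s \<or> int p dvd a * t + b * s"
    using assms(1,3) prime_dvd_mult_iff[of "int p"] by auto
  moreover have "a * (- t) - b * s = - (a * t + b * s)" by simp
  ultimately have "int p dvd a * t - b * s \<or> int p dvd a * (- t) - b * s" by (metis dvd_minus_iff)
  moreover have "s^2 + d * (- t)^2 = int p" using st by simp
  ultimately show ?thesis
    using representation_eq_if_dvd[OF ab st] representation_eq_if_dvd[OF ab]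
      prime_gt_0_nat[OF assms(1)] assms(2) by fastforce
qed

definition rep_xcoords :: "int \<Rightarrow> nat \<Rightarrow> int set" where
  "rep_xcoords d p = {x. \<exists>y. x^2 + d * y^2 = int p}"

lemma rep_xcoords_subset:
  assumes "prime p" "d > 0"
  shows "rep_xcoords d p \<subseteq> {x. x^2 < int p}"
proof
  fix x assume "x \<in> rep_xcoords d p"
  then obtain y where y: "x^2 + d * y^2 = int p" unfolding rep_xcoords_def by blast
  with prime_not_square[OF assms(1), of x] have "y \<noteq> 0" by auto
  with assms(2) have "0 < d * y^2" by simp
  with y show "x \<in> {x. x^2 < int p}" by simp
qed

lemma rep_xcoords_disjoint:
  assumes "prime p"
  shows "rep_xcoords 1 p \<inter> rep_xcoords 3 p = {}"
proof -
  have False if "x^2 + y^2 = int p" "x^2 + 3 * z^2 = int p" for x y z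
  proof -
    from that have "y = 0" using square_eq_prime_mult_square[of 3 y z] by simp
    with that(1) prime_not_square[OF assms] show False by simp
  qed
  thus ?thesis unfolding rep_xcoords_def by auto
qed

lemma card_rep_xcoords_1:
  assumes "prime p" "p mod 4 = 1"
  shows "card (rep_xcoords 1 p) = 4"
proof -
  obtain a b where ab: "a^2 + b^2 = int p" using prime_sum_two_squares[OF assms] .
  have "a \<noteq> 0" "b \<noteq> 0" using ab prime_not_square[OF assms(1)] by auto
  moreover have "a \<noteq> b" "a \<noteq> - b"
  proof -
    have "a^2 \<noteq> b^2"
    proof
      assume "a^2 = b^2"
      with ab have "int p = 2 * a^2" by simp
      hence "even (int p)" by simp
      with assms(2) show False by presburger
    qed
    thus "a \<noteq> b" "a \<noteq> - b" by auto
  qed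
  moreover have "rep_xcoords 1 p = {a, - a, b, - b}"
  proof
    show "rep_xcoords 1 p \<subseteq> {a, - a, b, - b}"
    proof
      fix x assume "x \<in> rep_xcoords 1 p"
      then obtain y where "x^2 + 1 * y^2 = int p" unfolding rep_xcoords_def by blast
      have "x^2 = a^2 \<or> x^2 = b^2"
        using representation_unique[OF assms(1), of 1 a b x y] ab \<open>x^2 + 1 * y^2 = int p\<close>
          prime_gt_1_nat[OF assms(1)] by simp
      thus "x \<in> {a, - a, b, - b}" by (auto simp: power2_eq_iff)
    qed
    have "a^2 + 1 * b^2 = int p" "b^2 + 1 * a^2 = int p" using ab by simp_all
    hence "a \<in> rep_xcoords 1 p" "b \<in> rep_xcoords 1 p"
      "- a \<in> rep_xcoords 1 p" "- b \<in> rep_xcoords 1 p"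
      unfolding rep_xcoords_def mem_Collect_eq power2_minus by blast+
    thus "{a, - a, b, - b} \<subseteq> rep_xcoords 1 p" by simp
  qed
  ultimately show ?thesis by (simp add: card_insert_if)
qed

lemma square_mod_4_cases: "(x::int)^2 mod 4 = 0 \<or> x^2 mod 4 = 1"
proof -
  have "x^2 mod 4 = (x mod 4)^2 mod 4" by (simp add: power_mod)
  moreover have "x mod 4 \<in> {0..<4}" by simp
  hence "x mod 4 \<in> {0, 1, 2, 3}" by (auto simp: atLeastLessThan_def)
  ultimately show ?thesis by (auto simp: power2_eq_square)
qed

lemma rep_xcoords_1_empty:
  assumes "p mod 4 = 3"
  shows "rep_xcoords 1 p = {}"
proof -
  have "x^2 + 1 * y^2 \<noteq> int p" for x y :: int
  proof -
    have "(x^2 + y^2) mod 4 = (x^2 mod 4 + y^2 mod 4) mod 4" by (simp add: mod_add_eq)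
    hence "(x^2 + y^2) mod 4 \<noteq> 3" using square_mod_4_cases[of x] square_mod_4_cases[of y] by auto
    moreover have "int p mod 4 = 3" using assms by presburger
    ultimately show ?thesis by auto
  qed
  thus ?thesis unfolding rep_xcoords_def by blast
qed

lemma card_rep_xcoords_3:
  assumes "prime p" "p mod 3 = 1"
  shows "card (rep_xcoords 3 p) = 2"
proof -
  obtain a b where ab: "a^2 + 3 * b^2 = int p" using prime_square_plus_three_squares[OF assms] .
  have "\<not> int p dvd 3"
  proof
    assume "int p dvd 3"
    hence "p dvd 3" by presburger
    with assms show False using primes_dvd_imp_eq[of p 3] by auto
  qed
  have "a \<noteq> 0"
  proof
    assume "a = 0"
    with ab have "3 dvd int p" by (metis dvd_triv_left add_0 zero_power2)
    with assms(2) show False by presburger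
  qed
  moreover have "rep_xcoords 3 p = {a, - a}"
  proof
    show "rep_xcoords 3 p \<subseteq> {a, - a}"
    proof
      fix x assume "x \<in> rep_xcoords 3 p"
      then obtain y where "x^2 + 3 * y^2 = int p" unfolding rep_xcoords_def by blast
      with representation_unique[OF assms(1) _ \<open>\<not> int p dvd 3\<close> ab] have "x^2 = a^2" by simp
      thus "x \<in> {a, - a}" by (auto simp: power2_eq_iff)
    qed
    have "a \<in> rep_xcoords 3 p" "- a \<in> rep_xcoords 3 p"
      using ab unfolding rep_xcoords_def mem_Collect_eq power2_minus by blast+
    thus "{a, - a} \<subseteq> rep_xcoords 3 p" by simp
  qed
  ultimately show ?thesis by simp
qed

lemma rep_xcoords_3_empty:
  assumes "p mod 3 = 2"
  shows "rep_xcoords 3 p = {}"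
proof -
  have "x^2 + 3 * y^2 \<noteq> int p" for x y :: int
  proof -
    have "(x^2 + 3 * y^2) mod 3 = (x mod 3)^2 mod 3" by (simp add: power_mod)
    moreover have "x mod 3 \<in> {0..<3}" by simp
    hence "x mod 3 \<in> {0, 1, 2}" by (auto simp: atLeastLessThan_def)
    ultimately have "(x^2 + 3 * y^2) mod 3 \<noteq> 2" by (auto simp: power2_eq_square)
    moreover have "int p mod 3 = 2" using assms by presburger
    ultimately show ?thesis by fastforce
  qed
  thus ?thesis unfolding rep_xcoords_def by blast
qed

lemma even_range_eq_image: "even_range p = (\<lambda>x. 2 * x) ` {x. x^2 < int p}"
proof -
  have "real_of_int \<bar>2 * x\<bar> < 2 * sqrt (real p) \<longleftrightarrow> x^2 < int p" for x
  proof -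
    have "real_of_int \<bar>2 * x\<bar> < 2 * sqrt (real p) \<longleftrightarrow> sqrt (real_of_int (x^2)) < sqrt (real p)"
      by (simp add: abs_mult)
    also have "\<dots> \<longleftrightarrow> x^2 < int p" by (simp only: real_sqrt_less_iff) linarith
    finally show ?thesis .
  qed
  thus ?thesis unfolding even_range_def by (auto elim!: evenE)
qed

lemma finite_square_less: "finite {x :: int. x^2 < n}"
proof (rule finite_subset)
  show "{x :: int. x^2 < n} \<subseteq> {-n..n}"
  proof
    fix x :: int assume "x \<in> {x. x^2 < n}"
    moreover have "\<bar>x\<bar> \<le> x^2"
    proof (cases "x = 0")
      case False
      hence "\<bar>x\<bar> * 1 \<le> \<bar>x\<bar> * \<bar>x\<bar>" by (intro mult_left_mono) auto
      thus ?thesis by (simp add: power2_eq_square)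
    qed simp
    ultimately show "x \<in> {-n..n}" by auto
  qed
qed simp

lemma c_weight_double:
  "c_weight (2 * x) p =
    (if x \<in> rep_xcoords 1 p then 1/2 else if x \<in> rep_xcoords 3 p then 2/3 else 0)"
proof -
  have "(2 * x)^2 - 4 * int p = - 4 * y^2 \<longleftrightarrow> x^2 + 1 * y^2 = int p" for y
    by (simp add: power_mult_distrib) arith
  hence four: "(\<exists>y. (2 * x)^2 - 4 * int p = - 4 * y^2) \<longleftrightarrow> x \<in> rep_xcoords 1 p"
    unfolding rep_xcoords_def by simp
  have "(\<exists>y. (2 * x)^2 - 4 * int p = - 3 * y^2) \<longleftrightarrow> x \<in> rep_xcoords 3 p"
  proof
    assume "\<exists>y. (2 * x)^2 - 4 * int p = - 3 * y^2"
    then obtain y where y: "3 * y^2 = 4 * (int p - x^2)" by (auto simp: power_mult_distrib algebra_simps)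
    hence "even (3 * y^2)" by simp
    hence "even y" by simp
    then obtain z where "y = 2 * z" by blast
    with y have "x^2 + 3 * z^2 = int p" by (simp add: power_mult_distrib algebra_simps)
    thus "x \<in> rep_xcoords 3 p" unfolding rep_xcoords_def by blast
  next
    assume "x \<in> rep_xcoords 3 p"
    then obtain z where "x^2 + 3 * z^2 = int p" unfolding rep_xcoords_def by blast
    hence "(2 * x)^2 - 4 * int p = - 3 * (2 * z)^2" by (simp add: power_mult_distrib algebra_simps)
    thus "\<exists>y. (2 * x)^2 - 4 * int p = - 3 * y^2" by blast
  qed
  with four show ?thesis unfolding c_weight_def by simp
qed

lemma sum_disjoint_two_valued:
  fixes a b :: "'b :: comm_semiring_1"
  assumes "finite S" "A \<subseteq> S" "B \<subseteq> S" "A \<inter> B = {}"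
  shows "(\<Sum>x\<in>S. if x \<in> A then a else if x \<in> B then b else 0) = of_nat (card A) * a + of_nat (card B) * b"
proof -
  have "(\<Sum>x\<in>S. if x \<in> A then a else if x \<in> B then b else 0)
      = (\<Sum>x\<in>S. (if x \<in> A then a else 0) + (if x \<in> B then b else 0))"
    using assms(4) by (intro sum.cong) auto
  also have "\<dots> = (\<Sum>x\<in>S \<inter> A. a) + (\<Sum>x\<in>S \<inter> B. b)"
    by (simp only: sum.distrib sum.inter_restrict[OF assms(1)])
  also have "\<dots> = of_nat (card A) * a + of_nat (card B) * b"
    using assms(2,3) by (simp add: Int_absorb1)
  finally show ?thesis .
qed

lemma sum_c_weight_eq_card:
  assumes "prime p"
  shows "(\<Sum>r\<in>even_range p. c_weight r p) = card (rep_xcoords 1 p) / 2 + 2 * card (rep_xcoords 3 p) / 3"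
proof -
  have "(\<Sum>r\<in>even_range p. c_weight r p) = (\<Sum>x\<in>{x. x^2 < int p}. c_weight (2 * x) p)"
    unfolding even_range_eq_image by (subst sum.reindex) (auto simp: inj_on_def)
  also have "\<dots> = card (rep_xcoords 1 p) * (1/2) + card (rep_xcoords 3 p) * (2/3)"
    unfolding c_weight_double using assms
    by (intro sum_disjoint_two_valued finite_square_less rep_xcoords_subset rep_xcoords_disjoint) auto
  finally show ?thesis by simp
qed

theorem proposition10:
  fixes p :: nat
  assumes "prime p"
  shows "(p mod 12 = 1 \<longrightarrow> (\<Sum>r\<in>even_range p. c_weight r p) = 10/3)
       \<and> (p mod 12 = 5 \<longrightarrow> (\<Sum>r\<in>even_range p. c_weight r p) = 2)
       \<and> (p mod 12 = 7 \<longrightarrow> (\<Sum>r\<in>even_range p. c_weight r p) = 4/3)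
       \<and> (p mod 12 = 11 \<longrightarrow> (\<Sum>r\<in>even_range p. c_weight r p) = 0)"
proof (intro conjI impI)
  assume "p mod 12 = 1"
  then have "p mod 4 = 1" "p mod 3 = 1" by presburger+
  with sum_c_weight_eq_card[OF assms] show "(\<Sum>r\<in>even_range p. c_weight r p) = 10/3"
    by (simp add: card_rep_xcoords_1[OF assms] card_rep_xcoords_3[OF assms])
next
  assume "p mod 12 = 5"
  then have "p mod 4 = 1" "p mod 3 = 2" by presburger+
  with sum_c_weight_eq_card[OF assms] show "(\<Sum>r\<in>even_range p. c_weight r p) = 2"
    by (simp add: card_rep_xcoords_1[OF assms] rep_xcoords_3_empty)
next
  assume "p mod 12 = 7"
  then have "p mod 4 = 3" "p mod 3 = 1" by presburger+
  with sum_c_weight_eq_card[OF assms] show "(\<Sum>r\<in>even_range p. c_weight r p) = 4/3"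
    by (simp add: rep_xcoords_1_empty card_rep_xcoords_3[OF assms])
next
  assume "p mod 12 = 11"
  then have "p mod 4 = 3" "p mod 3 = 2" by presburger+
  with sum_c_weight_eq_card[OF assms] show "(\<Sum>r\<in>even_range p. c_weight r p) = 0"
    by (simp add: rep_xcoords_1_empty rep_xcoords_3_empty)
qed

end
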